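(* Let $\alpha,\beta$ satisfy $0<\alpha\le\lambda_{\min}(\Sigma)$ and $\lambda_{\max}(\Sigma)\le\beta$, and let $\lambda>0$. Let $(\eta_k)_{k\ge0}$ be learning rates with $\eta\le\eta_k<1/\beta$ for some $\eta>0$, define $\gamma_k$ by $1-\lambda\gamma_k=\gamma_k/\eta_k$ (i.e. $\gamma_k=\eta_k/(1+\lambda\eta_k)$), and set $\gamma:=\eta/(1+\lambda\eta)$. Run the SGD paths $(w_k)$ (learning rates $\eta_k$, for $L$) and $(\hat w_k)$ (learning rates $\gamma_k$, for $L+\lambda R$) described in the context. Define the weighting scheme $P_k:=1-\prod_{i=0}^k(\gamma_i/\eta_i)$, $p_0:=P_0$, $p_k:=P_k-P_{k-1}$ ($k\ge1$), and the averaged iterates $\tilde w_k:=P_k^{-1}\sum_{i=0}^k p_iw_i$. Then: 1. For all $k\ge0$: $P_k\,\mathbb E[\tilde w_k]=\mathbb E[\hat w_k]-(1-P_k)\,\mathbb E[w_k]$. 2. Both $\mathbb E[w_k]$ and $\mathbb E[\hat w_k]$ converge (to $\Sigma^{-1}a$ and $(\Sigma+\lambda I)^{-1}a$ respectively), and there is a constant $C$ such that $\|\mathbb E[\hat w_k]-\mathbb E[\tilde w_k]\|_2\le C(1-\lambda\gamma)^k$ for all $k$. 3. Suppose the gradient noise $\epsilon_k:=(\Sigma w_k-a)-(x_{\xi_{k+1}}x_{\xi_{k+1}}^\top w_k-x_{\xi_{k+1}}y_{\xi_{k+1}})$ satisfies $\mathbb E[\|\epsilon_k\|_2^2]\le\sigma^2$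 for all $k$. Then for every $\delta\in(0,1)$ and all sufficiently large $k$, with probability at least $1-\delta$, $$\|P_k\tilde w_k-P_k\mathbb E[\tilde w_k]\|_2\le \frac{\sigma}{\gamma(\lambda+\alpha)(\lambda+\beta)^2}\sqrt{\frac{\lambda}{\delta\gamma(2-\lambda\gamma)}}.$$
   Context: Data $(x_i,y_i)\in\mathbb R^d\times\mathbb R$, $i=1,\dots,n$. Loss $L(w)=\frac1{2n}\sum_{i=1}^n(w^\top x_i-y_i)^2$, regularizer $R(w)=\frac12\|w\|_2^2$. Write $\Sigma=\frac1n\sum_i x_ix_i^\top$ and $a=\frac1n\sum_i x_iy_i$, so $\nabla L(w)=\Sigma w-a$; $L$ is $\alpha$-strongly convex and $\beta$-smooth under the stated conditions. Let $(\xi_k)_{k\ge1}$ be i.i.d. uniform on $\{1,\dots,n\}$. SGD paths (batch size 1, started at zero): $w_0=\hat w_0=0$, $w_{k+1}=w_k-\eta_k(x_{\xi_{k+1}}x_{\xi_{k+1}}^\top w_k-x_{\xi_{k+1}}y_{\xi_{k+1}})$, $\hat w_{k+1}=\hat w_k-\gamma_k(x_{\xi_{k+1}}x_{\xi_{k+1}}^\top \hat w_k-x_{\xi_{k+1}}y_{\xi_{k+1}}+\lambda\hat w_k)$. *)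

theory Defs
  imports "HOL-Probability.Probability"
begin

definition outer :: "real^'d \<Rightarrow> real^'d \<Rightarrow> real^'d^'d" where
  "outer u v = (\<chi> i j. u $ i * v $ j)"

definition data_Sigma :: "(nat \<Rightarrow> real^'d) \<Rightarrow> nat \<Rightarrow> real^'d^'d" where
  "data_Sigma x n = (1 / real n) *\<^sub>R (\<Sum>i<n. outer (x i) (x i))"

definition data_a :: "(nat \<Rightarrow> real^'d) \<Rightarrow> (nat \<Rightarrow> real) \<Rightarrow> nat \<Rightarrow> real^'d" where
  "data_a x y n = (1 / real n) *\<^sub>R (\<Sum>i<n. y i *\<^sub>R x i)"

definition eigenvalues :: "real^'d^'d \<Rightarrow> real set" where
  "eigenvalues A = {\<mu>. \<exists>v. v \<noteq> 0 \<and> A *v v = \<mu> *\<^sub>R v}"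

fun sgd_w :: "(nat \<Rightarrow> real^'d) \<Rightarrow> (nat \<Rightarrow> real) \<Rightarrow> (nat \<Rightarrow> real)
     \<Rightarrow> (nat \<Rightarrow> 'a \<Rightarrow> nat) \<Rightarrow> nat \<Rightarrow> 'a \<Rightarrow> real^'d" where
  "sgd_w x y eta \<xi> 0 \<omega> = 0"
| "sgd_w x y eta \<xi> (Suc k) \<omega> =
     (let v = sgd_w x y eta \<xi> k \<omega>; i = \<xi> (Suc k) \<omega>
      in v - eta k *\<^sub>R (outer (x i) (x i) *v v - y i *\<^sub>R x i))"

fun sgd_ridge :: "(nat \<Rightarrow> real^'d) \<Rightarrow> (nat \<Rightarrow> real) \<Rightarrow> real \<Rightarrow> (nat \<Rightarrow> real)
     \<Rightarrow> (nat \<Rightarrow> 'a \<Rightarrow> nat) \<Rightarrow> nat \<Rightarrow> 'a \<Rightarrow> real^'d" where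
  "sgd_ridge x y lam gam \<xi> 0 \<omega> = 0"
| "sgd_ridge x y lam gam \<xi> (Suc k) \<omega> =
     (let v = sgd_ridge x y lam gam \<xi> k \<omega>; i = \<xi> (Suc k) \<omega>
      in v - gam k *\<^sub>R (outer (x i) (x i) *v v - y i *\<^sub>R x i + lam *\<^sub>R v))"

definition wP :: "(nat \<Rightarrow> real) \<Rightarrow> (nat \<Rightarrow> real) \<Rightarrow> nat \<Rightarrow> real" where
  "wP gam eta k = 1 - (\<Prod>i\<le>k. gam i / eta i)"

definition wp :: "(nat \<Rightarrow> real) \<Rightarrow> (nat \<Rightarrow> real) \<Rightarrow> nat \<Rightarrow> real" where
  "wp gam eta k = (if k = 0 then wP gam eta 0 else wP gam eta k - wP gam eta (k - 1))"

definition avg_w :: "(nat \<Rightarrow> real) \<Rightarrow> (nat \<Rightarrow> real) \<Rightarrow> (nat \<Rightarrow> 'a \<Rightarrow> real^'d) \<Rightarrow> nat \<Rightarrow> 'a \<Rightarrow> real^'d" where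
  "avg_w gam eta w k \<omega> = (1 / wP gam eta k) *\<^sub>R (\<Sum>i\<le>k. wp gam eta i *\<^sub>R w i \<omega>)"

end

theory Submission
  imports Defs
begin

text \<open>Each SGD step is affine in the current iterate and uses a fresh uniform index, so the means
  \<open>E[w\<^sub>k]\<close> and \<open>E[\<^sup>^w\<^sub>k]\<close> are exactly the gradient descent iterates on \<open>L\<close> and on \<open>L + \<lambda>R\<close>. The weights \<open>p\<^sub>i\<close> are chosen so that the mixture
  \<open>\<Sum>\<^sub>i\<^sub>\<le>\<^sub>k p\<^sub>i E[w\<^sub>i] + (1 - P\<^sub>k) E[w\<^sub>k]\<close> satisfies the ridge recursion, which is identity 1.
  Both gradient descent sequences converge linearly, and \<open>1 - P\<^sub>k\<close> decays like \<open>(1 - \<lambda>\<gamma>)\<^sup>k\<close>,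
  which gives 2. For 3, \<open>P\<^sub>k\<close> times the centred average is a sum of the noise terms \<open>\<epsilon>\<^sub>j\<close> pushed through the
  contractions \<open>I - \<eta>\<^sub>i \<Sigma>\<close> and weighted by the \<open>p\<^sub>i\<close>. These terms are orthogonal, since \<open>\<epsilon>\<^sub>j\<close>
  has mean zero over the index \<open>\<xi>\<^sub>j\<^sub>+\<^sub>1\<close>, and their gains are at most
  \<open>\<lambda>\<gamma>\<^sub>j\<Prod>\<^sub>i\<^sub><\<^sub>j(1 - \<lambda>\<gamma>\<^sub>i)/(\<lambda> + \<alpha>)\<close>; the second moment is therefore bounded by a geometric series,
  and Chebyshev's inequality concludes.\<close>

section \<open>Self-adjoint matrices and elementary estimates\<close>

lemma outer_mult_vector: "outer u v *v w = inner v w *\<^sub>R u"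
  by (simp add: outer_def matrix_vector_mult_def inner_vec_def vec_eq_iff sum_distrib_left
      algebra_simps)

lemma sum_matrix_vector_mult: "(\<Sum>i\<in>I. (A i :: real^'n^'m)) *v v = (\<Sum>i\<in>I. A i *v v)"
  by (induct I rule: infinite_finite_induct) (auto simp: matrix_vector_mult_add_rdistrib)

lemma data_Sigma_mult_vector:
  "data_Sigma x n *v v = (1 / real n) *\<^sub>R (\<Sum>i<n. inner (x i) v *\<^sub>R x i)"
  unfolding data_Sigma_def
  by (simp add: scaleR_matrix_vector_assoc[symmetric] sum_matrix_vector_mult outer_mult_vector)

lemma data_Sigma_self_adjoint: "inner (data_Sigma x n *v u) v = inner u (data_Sigma x n *v v)"
  unfolding data_Sigma_mult_vector
  by (simp add: inner_sum_left inner_sum_right inner_commute mult.commute)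

lemma quadratic_nonpos_imp_linear_coeff_zero:
  fixes g K :: real
  assumes "\<And>s. 2 * s * g + s\<^sup>2 * K \<le> 0"
  shows "g = 0"
proof (rule ccontr)
  assume "g \<noteq> 0"
  define D where "D = \<bar>K\<bar> + 1"
  have "D > 0" "2 * D + K > 0" unfolding D_def by (auto simp: abs_if)
  then have "2 * (g / D) * g + (g / D)\<^sup>2 * K = g\<^sup>2 * (2 * D + K) / D\<^sup>2"
    by (simp add: field_simps power2_eq_square)
  also have "\<dots> > 0" using \<open>g \<noteq> 0\<close> \<open>D > 0\<close> \<open>2 * D + K > 0\<close> by simp
  finally show False using assms[of "g / D"] by simp
qed

text \<open>A unit vector at which a self-adjoint \<open>B\<close> attains its operator norm \<open>c\<close> satisfies
  \<open>B (B u) = c\<^sup>2 u\<close>: perturbing \<open>u\<close> in any direction \<open>h\<close> cannot increase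
  \<open>\<parallel>B v\<parallel>\<^sup>2 - c\<^sup>2 \<parallel>v\<parallel>\<^sup>2\<close>, so its derivative in direction \<open>h\<close> vanishes.\<close>
lemma self_adjoint_norm_maximizer:
  fixes B :: "'a::real_inner \<Rightarrow> 'a"
  assumes lin: "linear B" and sym: "\<And>u v. inner (B u) v = inner u (B v)"
    and u: "norm u = 1" and max: "\<And>w. norm (B w) \<le> norm (B u) * norm w"
  shows "B (B u) = (norm (B u))\<^sup>2 *\<^sub>R u"
proof -
  define c where "c = norm (B u)"
  have orth: "inner (B (B u) - c\<^sup>2 *\<^sub>R u) h = 0" for h
  proof -
    define g where "g = inner (B u) (B h) - c\<^sup>2 * inner u h"
    define K where "K = inner (B h) (B h) - c\<^sup>2 * inner h h"
    have "2 * s * g + s\<^sup>2 * K \<le> 0" for s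
    proof -
      have "(norm (B (u + s *\<^sub>R h)))\<^sup>2 \<le> (c * norm (u + s *\<^sub>R h))\<^sup>2"
        using max[of "u + s *\<^sub>R h"] unfolding c_def by (intro power_mono) auto
      moreover have "(norm (B (u + s *\<^sub>R h)))\<^sup>2
          = inner (B u) (B u) + 2 * s * inner (B u) (B h) + s\<^sup>2 * inner (B h) (B h)"
        using lin unfolding power2_norm_eq_inner
        by (simp add: linear_add linear_scale inner_add_left inner_add_right
            inner_commute[of "B h" "B u"] power2_eq_square algebra_simps)
      moreover have "(c * norm (u + s *\<^sub>R h))\<^sup>2
          = c\<^sup>2 * (inner u u + 2 * s * inner u h + s\<^sup>2 * inner h h)"
        unfolding power_mult_distrib power2_norm_eq_inner
        by (simp add: inner_add_left inner_add_right inner_commute[of h u]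
            power2_eq_square algebra_simps)
      moreover have "inner u u = 1" "inner (B u) (B u) = c\<^sup>2"
        using u by (simp_all add: c_def power2_norm_eq_inner[symmetric])
      ultimately show ?thesis unfolding g_def K_def by (simp add: algebra_simps)
    qed
    then have "g = 0" by (rule quadratic_nonpos_imp_linear_coeff_zero)
    then show ?thesis unfolding g_def by (simp add: inner_diff_left sym)
  qed
  show ?thesis
    using orth[of "B (B u) - c\<^sup>2 *\<^sub>R u"] unfolding c_def by simp
qed

lemma self_adjoint_norm_le:
  fixes B :: "'a::euclidean_space \<Rightarrow> 'a"
  assumes lin: "linear B" and sym: "\<And>u v. inner (B u) v = inner u (B v)"
    and eig: "\<And>\<mu> z. z \<noteq> 0 \<Longrightarrow> B z = \<mu> *\<^sub>R z \<Longrightarrow> \<bar>\<mu>\<bar> \<le> c"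
  shows "norm (B v) \<le> c * norm v"
proof -
  have cont: "continuous_on (sphere 0 1) (\<lambda>u. norm (B u))"
    by (intro continuous_intros linear_continuous_on linear_conv_bounded_linear[THEN iffD1] lin)
  have "sphere (0::'a) 1 \<noteq> {}" by simp
  then obtain u where "u \<in> sphere 0 1" and umax: "\<And>w. w \<in> sphere 0 1 \<Longrightarrow> norm (B w) \<le> norm (B u)"
    using continuous_attains_sup[OF compact_sphere _ cont] by blast
  then have u: "norm u = 1" by simp
  define c0 where "c0 = norm (B u)"
  have max: "norm (B w) \<le> c0 * norm w" for w
  proof (cases "w = 0")
    case True
    then show ?thesis using lin by (simp add: linear_0)
  next
    case False
    then have "norm (B ((1 / norm w) *\<^sub>R w)) \<le> c0"
      unfolding c0_def by (intro umax) simp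
    then show ?thesis using lin False by (simp add: linear_scale field_simps)
  qed
  have BB: "B (B u) = c0\<^sup>2 *\<^sub>R u"
    unfolding c0_def by (rule self_adjoint_norm_maximizer[OF lin sym u max[unfolded c0_def]])
  txt \<open>Either \<open>B u + c0 u\<close> is an eigenvector for \<open>c0\<close>, or \<open>u\<close> is one for \<open>-c0\<close>.\<close>
  have "c0 \<le> c"
  proof (cases "B u + c0 *\<^sub>R u = 0")
    case True
    then have "B u = (- c0) *\<^sub>R u" by (simp add: eq_neg_iff_add_eq_0)
    moreover have "u \<noteq> 0" using u by auto
    ultimately show ?thesis using eig[of u "- c0"] by simp
  next
    case False
    have "B (B u + c0 *\<^sub>R u) = c0 *\<^sub>R (B u + c0 *\<^sub>R u)"
      using lin BB by (simp add: linear_add linear_scale algebra_simps power2_eq_square)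
    then have "\<bar>c0\<bar> \<le> c" by (rule eig[OF False])
    then show ?thesis by simp
  qed
  then show ?thesis using max[of v] by (meson mult_right_mono norm_ge_zero order_trans)
qed

lemma self_adjoint_eigenvalues_nonempty:
  fixes A :: "real^'d^'d"
  assumes "\<And>u v. inner (A *v u) v = inner u (A *v v)"
  shows "eigenvalues A \<noteq> {}"
proof
  assume none: "eigenvalues A = {}"
  have "norm (A *v 1) \<le> -1 * norm (1 :: real^'d)"
    by (rule self_adjoint_norm_le) (use assms none in \<open>auto simp: eigenvalues_def\<close>)
  moreover have "(1 :: real^'d) \<noteq> 0" by (simp add: vec_eq_iff)
  ultimately show False by (smt (verit) norm_ge_zero zero_less_norm_iff)
qed

lemma norm_gradient_step_le:
  fixes A :: "real^'d^'d"
  assumes sym: "\<And>u v. inner (A *v u) v = inner u (A *v v)"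
    and eig: "\<forall>\<mu>\<in>eigenvalues A. \<alpha> \<le> \<mu> \<and> \<mu> \<le> \<beta>"
    and t: "0 \<le> t" "t * \<beta> \<le> 1"
  shows "norm (v - t *\<^sub>R (A *v v)) \<le> (1 - t * \<alpha>) * norm v"
proof -
  have "norm ((\<lambda>v. v - t *\<^sub>R (A *v v)) v) \<le> (1 - t * \<alpha>) * norm v"
  proof (rule self_adjoint_norm_le)
    show "linear (\<lambda>v. v - t *\<^sub>R (A *v v))"
      by (rule linearI) (simp_all add: algebra_simps)
    show "inner (u - t *\<^sub>R (A *v u)) v = inner u (v - t *\<^sub>R (A *v v))" for u v
      by (simp add: inner_diff_left inner_diff_right sym)
  next
    fix \<mu> and z :: "real^'d"
    assume z: "z \<noteq> 0" and Bz: "z - t *\<^sub>R (A *v z) = \<mu> *\<^sub>R z"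
    then have "t *\<^sub>R (A *v z) = (1 - \<mu>) *\<^sub>R z" by (simp add: algebra_simps)
    show "\<bar>\<mu>\<bar> \<le> 1 - t * \<alpha>"
    proof (cases "t = 0")
      case True
      then have "(1 - \<mu>) *\<^sub>R z = 0" using \<open>t *\<^sub>R (A *v z) = (1 - \<mu>) *\<^sub>R z\<close> by simp
      then show ?thesis using z True by simp
    next
      case False
      have "(1 / t) *\<^sub>R (t *\<^sub>R (A *v z)) = (1 / t) *\<^sub>R ((1 - \<mu>) *\<^sub>R z)"
        using \<open>t *\<^sub>R (A *v z) = (1 - \<mu>) *\<^sub>R z\<close> by simp
      then have "A *v z = ((1 - \<mu>) / t) *\<^sub>R z" using False by simp
      then have "(1 - \<mu>) / t \<in> eigenvalues A" using z unfolding eigenvalues_def by blast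
      then have "\<alpha> \<le> (1 - \<mu>) / t" "(1 - \<mu>) / t \<le> \<beta>" using eig by auto
      then have "t * \<alpha> \<le> 1 - \<mu> \<and> 1 - \<mu> \<le> t * \<beta>"
        using False t by (simp add: field_simps)
      then show ?thesis using t by (simp add: abs_if)
    qed
  qed
  then show ?thesis by simp
qed

lemma matrix_inv_mult_vector:
  fixes A :: "real^'n^'n"
  assumes "\<And>v. A *v v = 0 \<Longrightarrow> v = 0"
  shows "A *v (matrix_inv A *v b) = b"
proof -
  obtain B where B: "B ** A = mat 1" using matrix_left_invertible_ker[of A] assms by blast
  then have "A ** B = mat 1" using matrix_left_right_inverse by blast
  then have "A ** matrix_inv A = mat 1 \<and> matrix_inv A ** A = mat 1"
    unfolding matrix_inv_def using B by (rule someI[where x=B, OF conjI])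
  then show ?thesis by (simp add: matrix_vector_mul_assoc)
qed

lemma geometric_error_tendsto:
  fixes f :: "nat \<Rightarrow> 'a::real_normed_vector"
  assumes err: "\<And>k. norm (f k - c) \<le> q ^ k * C" and q: "0 \<le> q" "q < 1"
  shows "f \<longlonglongrightarrow> c"
proof -
  have "(\<lambda>k. q ^ k * C) \<longlonglongrightarrow> 0"
    using q by (intro tendsto_mult_left_zero LIMSEQ_power_zero) simp
  then have "(\<lambda>k. f k - c) \<longlonglongrightarrow> 0"
    by (rule Lim_null_comparison[rotated]) (use err in \<open>auto intro: always_eventually\<close>)
  then show ?thesis by (simp add: LIM_zero_iff)
qed

lemma sum_telescope_prod:
  "(\<Sum>d<(N::nat). (1 - f d) * (\<Prod>q<d. f q)) = 1 - (\<Prod>q<N. (f q :: real))"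
  by (induct N) (simp_all add: algebra_simps)

section \<open>Gradient descent on the expected losses\<close>

locale gd_setting =
  fixes A :: "real^'d^'d" and b :: "real^'d"
    and \<alpha> \<beta> lam \<eta> :: real and eta :: "nat \<Rightarrow> real"
  assumes self_adjoint: "\<And>u v. inner (A *v u) v = inner u (A *v v)"
    and alpha_pos: "0 < \<alpha>"
    and eig: "\<forall>\<mu>\<in>eigenvalues A. \<alpha> \<le> \<mu> \<and> \<mu> \<le> \<beta>"
    and lam_pos: "lam > 0"
    and eta_pos: "\<eta> > 0"
    and eta_bnd: "\<forall>k. \<eta> \<le> eta k \<and> eta k < 1 / \<beta>"
begin

definition gam :: "nat \<Rightarrow> real" where "gam k = eta k / (1 + lam * eta k)"

definition shrink :: "nat \<Rightarrow> real" where "shrink k = 1 / (1 + lam * eta k)"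

definition shrink_prod :: "nat \<Rightarrow> real" where "shrink_prod k = (\<Prod>i<k. shrink i)"

fun gd :: "nat \<Rightarrow> real^'d" where
  "gd 0 = 0"
| "gd (Suc k) = gd k - eta k *\<^sub>R (A *v gd k - b)"

fun ridge_gd :: "nat \<Rightarrow> real^'d" where
  "ridge_gd 0 = 0"
| "ridge_gd (Suc k) = ridge_gd k - gam k *\<^sub>R (A *v ridge_gd k - b + lam *\<^sub>R ridge_gd k)"

definition w_opt :: "real^'d" where "w_opt = matrix_inv A *v b"

definition w_ridge :: "real^'d" where "w_ridge = matrix_inv (A + lam *\<^sub>R mat 1) *v b"

lemma beta_pos: "\<beta> > 0"
proof -
  have "0 < 1 / \<beta>" using eta_bnd[rule_format, of 0] eta_pos by linarith
  then show ?thesis by simp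
qed

lemma eta_k_pos: "eta k > 0"
  using eta_bnd eta_pos by (meson less_le_trans)

lemma eta_k_beta: "eta k * \<beta> < 1"
  using eta_bnd beta_pos by (simp add: field_simps)

lemma alpha_le_beta: "\<alpha> \<le> \<beta>"
  using self_adjoint_eigenvalues_nonempty[OF self_adjoint] eig by force

lemma norm_gd_step_le: "norm (v - eta k *\<^sub>R (A *v v)) \<le> (1 - eta k * \<alpha>) * norm v"
  using eta_k_pos[of k] eta_k_beta[of k]
  by (intro norm_gradient_step_le[OF self_adjoint eig]) auto

definition rate :: real where "rate = max 0 (1 - \<eta> * \<alpha>)"

lemma rate_nonneg: "rate \<ge> 0"
  by (simp add: rate_def)

lemma rate_less_1: "rate < 1"
  using eta_pos alpha_pos by (simp add: rate_def)

lemma norm_gd_step_le_rate: "norm (v - eta k *\<^sub>R (A *v v)) \<le> rate * norm v"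
proof -
  have "\<eta> * \<alpha> \<le> eta k * \<alpha>" using eta_bnd alpha_pos by (simp add: mult_right_mono)
  then have "1 - eta k * \<alpha> \<le> rate" by (simp add: rate_def)
  then show ?thesis using norm_gd_step_le[of v k] by (meson mult_right_mono norm_ge_zero order_trans)
qed

lemma denom_pos: "1 + lam * eta k > 0"
  using eta_k_pos[of k] lam_pos by (simp add: add_pos_pos)

lemma shrink_eq: "shrink k = 1 - lam * gam k"
  unfolding shrink_def gam_def using denom_pos[of k] by (simp add: field_simps)

lemma gam_eq: "gam k = shrink k * eta k"
  unfolding shrink_def gam_def by simp

lemma shrink_pos: "shrink k > 0"
  unfolding shrink_def using denom_pos[of k] by simp

lemma shrink_le_1: "shrink k \<le> 1"
  unfolding shrink_def using denom_pos[of k] eta_k_pos[of k] lam_pos by simp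

lemma gam_pos: "gam k > 0"
  unfolding gam_eq using shrink_pos eta_k_pos by simp

lemma wP_eq: "wP gam eta k = 1 - shrink_prod (Suc k)"
proof -
  have "gam i / eta i = shrink i" for i using eta_k_pos[of i] unfolding gam_eq by simp
  then show ?thesis unfolding wP_def shrink_prod_def lessThan_Suc_atMost by simp
qed

lemma wp_eq: "wp gam eta k = lam * gam k * shrink_prod k"
  by (cases k) (simp_all add: wp_def wP_eq shrink_prod_def shrink_eq algebra_simps)

text \<open>The weighted mixture \<open>u\<^sub>k\<close> of the plain iterates satisfies the ridge recursion, since its
  ridge gradient \<open>A u\<^sub>k + \<lambda> u\<^sub>k - b\<close> is \<open>R\<^sub>k (A gd\<^sub>k - b)\<close>, with \<open>R\<^sub>k\<close> the product of the shrink factors.\<close>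
lemma weighted_gd_mixture:
  defines "u k \<equiv> (\<Sum>i\<le>k. wp gam eta i *\<^sub>R gd i) + shrink_prod (Suc k) *\<^sub>R gd k"
  shows "u k = ridge_gd k \<and> A *v u k + lam *\<^sub>R u k - b = shrink_prod k *\<^sub>R (A *v gd k - b)"
proof (induct k)
  case 0
  show ?case by (simp add: u_def shrink_prod_def)
next
  case (Suc k)
  have R: "shrink_prod (Suc k) = shrink_prod k * shrink k" by (simp add: shrink_prod_def)
  have R2: "shrink_prod (Suc (Suc k)) = shrink_prod (Suc k) * (1 - lam * gam (Suc k))"
    by (simp add: shrink_prod_def shrink_eq)
  have "u (Suc k) = u k + shrink_prod (Suc k) *\<^sub>R (gd (Suc k) - gd k)"
    unfolding u_def wp_eq R2 by (simp add: algebra_simps del: gd.simps)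
  also have "\<dots> = u k - gam k *\<^sub>R (shrink_prod k *\<^sub>R (A *v gd k - b))"
    unfolding R gam_eq by (simp add: algebra_simps)
  also have "\<dots> = u k - gam k *\<^sub>R (A *v u k + lam *\<^sub>R u k - b)"
    using Suc[THEN conjunct2] by simp
  finally have U: "u (Suc k) = u k - gam k *\<^sub>R (A *v u k + lam *\<^sub>R u k - b)" .
  have "A *v u (Suc k) + lam *\<^sub>R u (Suc k) - b
      = (1 - lam * gam k) *\<^sub>R (A *v u k + lam *\<^sub>R u k - b)
        - gam k *\<^sub>R (A *v (A *v u k + lam *\<^sub>R u k - b))"
    unfolding U by (simp add: algebra_simps matrix_vector_mult_diff_distrib)
  also have "\<dots> = shrink_prod (Suc k) *\<^sub>R (A *v gd (Suc k) - b)"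
    unfolding Suc[THEN conjunct2] R shrink_eq[symmetric]
    by (simp add: gam_eq algebra_simps matrix_vector_mult_diff_distrib)
  moreover have "u (Suc k) = ridge_gd (Suc k)" unfolding U using Suc by (simp add: algebra_simps)
  ultimately show ?case by simp
qed

lemma weighted_gd_sum: "(\<Sum>i\<le>k. wp gam eta i *\<^sub>R gd i) = ridge_gd k - shrink_prod (Suc k) *\<^sub>R gd k"
  using weighted_gd_mixture[of k] by (simp add: algebra_simps)

lemma A_mult_w_opt: "A *v w_opt = b"
  unfolding w_opt_def
proof (rule matrix_inv_mult_vector)
  fix v assume "A *v v = 0"
  then have "v \<noteq> 0 \<Longrightarrow> 0 \<in> eigenvalues A" unfolding eigenvalues_def by force
  then show "v = 0" using eig alpha_pos by force
qed

lemma A_mult_w_ridge: "A *v w_ridge + lam *\<^sub>R w_ridge = b"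
proof -
  have ridge: "(A + lam *\<^sub>R mat 1) *v v = A *v v + lam *\<^sub>R v" for v
    by (simp add: matrix_vector_mult_add_rdistrib scaleR_matrix_vector_assoc[symmetric])
  have "(A + lam *\<^sub>R mat 1) *v w_ridge = b"
    unfolding w_ridge_def
  proof (rule matrix_inv_mult_vector)
    fix v assume "(A + lam *\<^sub>R mat 1) *v v = 0"
    then have "A *v v = (- lam) *\<^sub>R v" unfolding ridge by (simp add: eq_neg_iff_add_eq_0)
    then have "v \<noteq> 0 \<Longrightarrow> - lam \<in> eigenvalues A" unfolding eigenvalues_def by blast
    then show "v = 0" using eig alpha_pos lam_pos by force
  qed
  then show ?thesis unfolding ridge .
qed

lemma gd_error: "norm (gd k - w_opt) \<le> rate ^ k * norm w_opt"
proof (induct k)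
  case (Suc k)
  have "gd (Suc k) - w_opt = (gd k - w_opt) - eta k *\<^sub>R (A *v (gd k - w_opt))"
    using A_mult_w_opt by (simp add: algebra_simps matrix_vector_mult_diff_distrib)
  then have "norm (gd (Suc k) - w_opt) \<le> rate * norm (gd k - w_opt)"
    by (simp only: norm_gd_step_le_rate)
  also have "\<dots> \<le> rate * (rate ^ k * norm w_opt)"
    using Suc rate_nonneg by (intro mult_left_mono)
  finally show ?case by simp
qed simp

lemma ridge_gd_error: "norm (ridge_gd k - w_ridge) \<le> rate ^ k * norm w_ridge"
proof (induct k)
  case (Suc k)
  have "ridge_gd (Suc k) - w_ridge
      = (1 - lam * gam k) *\<^sub>R (ridge_gd k - w_ridge) - gam k *\<^sub>R (A *v (ridge_gd k - w_ridge))"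
  proof -
    have "r - t *\<^sub>R (A *v r - (A *v w + lam *\<^sub>R w) + lam *\<^sub>R r) - w
        = (1 - lam * t) *\<^sub>R (r - w) - t *\<^sub>R (A *v (r - w))" for r w :: "real^'d" and t
      by (simp add: algebra_simps matrix_vector_mult_diff_distrib)
    from this[of "ridge_gd k" "gam k" w_ridge] show ?thesis unfolding A_mult_w_ridge by simp
  qed
  also have "\<dots> = shrink k *\<^sub>R ((ridge_gd k - w_ridge) - eta k *\<^sub>R (A *v (ridge_gd k - w_ridge)))"
    unfolding shrink_eq[symmetric] by (simp add: gam_eq algebra_simps)
  finally have "norm (ridge_gd (Suc k) - w_ridge)
      = shrink k * norm ((ridge_gd k - w_ridge) - eta k *\<^sub>R (A *v (ridge_gd k - w_ridge)))"
    using shrink_pos[of k] by simp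
  also have "\<dots> \<le> 1 * (rate * norm (ridge_gd k - w_ridge))"
    using shrink_pos[of k] shrink_le_1[of k] norm_gd_step_le_rate rate_nonneg
    by (intro mult_mono) auto
  also have "\<dots> \<le> rate * (rate ^ k * norm w_ridge)"
    using Suc rate_nonneg by (simp add: mult_left_mono)
  finally show ?case by simp
qed simp

lemma gd_tendsto: "gd \<longlonglongrightarrow> w_opt"
  using gd_error rate_nonneg rate_less_1 by (rule geometric_error_tendsto)

lemma ridge_gd_tendsto: "ridge_gd \<longlonglongrightarrow> w_ridge"
  using ridge_gd_error rate_nonneg rate_less_1 by (rule geometric_error_tendsto)

text \<open>\<open>gam_min\<close> is the \<open>\<gamma>\<close> of the statement: the ridge step size belonging to the smallest step \<open>\<eta>\<close>.\<close>
definition gam_min :: real where "gam_min = \<eta> / (1 + lam * \<eta>)"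

definition rho :: real where "rho = 1 - lam * gam_min"

lemma denom_min_pos: "1 + lam * \<eta> > 0"
  using eta_pos lam_pos by (simp add: add_pos_pos)

lemma rho_eq: "rho = 1 / (1 + lam * \<eta>)"
  unfolding rho_def gam_min_def using denom_min_pos by (simp add: field_simps)

lemma rho_pos: "rho > 0"
  unfolding rho_eq using denom_min_pos by simp

lemma rho_less_1: "rho < 1"
  unfolding rho_eq using denom_min_pos eta_pos lam_pos by simp

lemma shrink_le_rho: "shrink k \<le> rho"
  unfolding rho_eq shrink_def using eta_bnd denom_min_pos lam_pos denom_pos[of k]
  by (intro divide_left_mono) (auto intro: mult_left_mono)

lemma shrink_prod_pos: "shrink_prod k > 0"
  unfolding shrink_prod_def using shrink_pos by (simp add: prod_pos)

lemma shrink_prod_le: "shrink_prod k \<le> rho ^ k"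
proof -
  have "shrink_prod k \<le> (\<Prod>i<k. rho)"
    unfolding shrink_prod_def using shrink_pos shrink_le_rho by (intro prod_mono) (auto intro: less_imp_le)
  then show ?thesis by simp
qed

lemma wP_lower: "wP gam eta k \<ge> 1 - shrink 0"
proof -
  have "shrink_prod (Suc k) = shrink 0 * (\<Prod>i<k. shrink (Suc i))"
    unfolding shrink_prod_def by (rule prod.lessThan_Suc_shift)
  also have "\<dots> \<le> shrink 0"
    using shrink_pos shrink_le_1 by (intro mult_left_le prod_le_1) (auto intro: less_imp_le)
  finally show ?thesis unfolding wP_eq by simp
qed

lemma shrink_0_less_1: "shrink 0 < 1"
  using shrink_le_rho[of 0] rho_less_1 by simp

lemma wP_pos: "wP gam eta k > 0"
  using wP_lower[of k] shrink_0_less_1 by simp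

lemma norm_gd_minus_ridge_gd_le: "norm (gd k - ridge_gd k) \<le> 2 * (norm w_opt + norm w_ridge)"
proof -
  have "rate ^ k * norm v \<le> norm v" for v :: "real^'d"
    using rate_nonneg rate_less_1 by (simp add: mult_left_le_one_le power_le_one)
  then have "norm (gd k - w_opt) \<le> norm w_opt" "norm (ridge_gd k - w_ridge) \<le> norm w_ridge"
    using gd_error[of k] ridge_gd_error[of k] by (meson order_trans)+
  moreover have "norm (gd k - ridge_gd k)
      \<le> norm (gd k - w_opt) + norm w_opt + norm (ridge_gd k - w_ridge) + norm w_ridge"
    by norm
  ultimately show ?thesis by simp
qed

text \<open>Since the weights sum to \<open>P\<^sub>k\<close>, the weighted mean deviates from the ridge iterate by
  \<open>R\<^sub>k\<^sub>+\<^sub>1 / P\<^sub>k\<close> times the distance between the two bounded GD sequences.\<close>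
lemma ridge_gd_minus_weighted_mean_le:
  "norm (ridge_gd k - (1 / wP gam eta k) *\<^sub>R (\<Sum>i\<le>k. wp gam eta i *\<^sub>R gd i))
     \<le> 2 * (norm w_opt + norm w_ridge) / (1 - shrink 0) * rho ^ k"
proof -
  define R where "R = shrink_prod (Suc k)"
  have P: "wP gam eta k = 1 - R" "1 - R \<ge> 1 - shrink 0" "1 - shrink 0 > 0"
    unfolding R_def using wP_eq wP_lower[of k] shrink_0_less_1 by auto
  have c: "1 - 1 / (1 - R) = - (R / (1 - R))" "1 / (1 - R) * R = R / (1 - R)"
    using P by (auto simp: field_simps)
  have "ridge_gd k - (1 / wP gam eta k) *\<^sub>R (\<Sum>i\<le>k. wp gam eta i *\<^sub>R gd i)
      = (1 - 1 / (1 - R)) *\<^sub>R ridge_gd k + (1 / (1 - R) * R) *\<^sub>R gd k"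
    unfolding weighted_gd_sum P(1) R_def[symmetric] by (simp add: algebra_simps)
  also have "\<dots> = (R / (1 - R)) *\<^sub>R (gd k - ridge_gd k)"
    unfolding c by (simp add: algebra_simps)
  finally have "norm (ridge_gd k - (1 / wP gam eta k) *\<^sub>R (\<Sum>i\<le>k. wp gam eta i *\<^sub>R gd i))
      = R / (1 - R) * norm (gd k - ridge_gd k)"
    using P shrink_prod_pos[of "Suc k"] unfolding R_def by simp
  also have "\<dots> \<le> rho ^ k / (1 - shrink 0) * (2 * (norm w_opt + norm w_ridge))"
  proof (intro mult_mono frac_le)
    have "R \<le> rho * rho ^ k" unfolding R_def using shrink_prod_le[of "Suc k"] by simp
    then show "R \<le> rho ^ k" using rho_pos rho_less_1 by (smt (verit) mult_left_le_one_le zero_le_power)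
    show "norm (gd k - ridge_gd k) \<le> 2 * (norm w_opt + norm w_ridge)"
      by (rule norm_gd_minus_ridge_gd_le)
  qed (use P shrink_prod_pos[of "Suc k"] rho_pos R_def in auto)
  finally show ?thesis by (simp add: field_simps)
qed

definition step_factor :: "nat \<Rightarrow> real" where "step_factor k = 1 - eta k * \<alpha>"

lemma step_factor_pos: "step_factor k > 0"
proof -
  have "eta k * \<alpha> \<le> eta k * \<beta>" using alpha_le_beta eta_k_pos[of k] by simp
  then show ?thesis unfolding step_factor_def using eta_k_beta[of k] by linarith
qed

fun propagate :: "nat \<Rightarrow> nat \<Rightarrow> real^'d \<Rightarrow> real^'d" where
  "propagate l 0 v = v"
| "propagate l (Suc d) v = propagate l d v - eta (l + d) *\<^sub>R (A *v propagate l d v)"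

lemma linear_propagate: "linear (propagate l d)"
proof (induct d)
  case 0
  then show ?case by (simp add: linear_id[unfolded id_def])
next
  case (Suc d)
  show ?case
    by (rule linearI) (use Suc in \<open>simp_all add: linear_add linear_scale algebra_simps\<close>)
qed

lemma norm_propagate_le: "norm (propagate l d v) \<le> (\<Prod>q<d. step_factor (l + q)) * norm v"
proof (induct d)
  case (Suc d)
  have "norm (propagate l (Suc d) v) \<le> step_factor (l + d) * norm (propagate l d v)"
    unfolding step_factor_def by (simp add: norm_gd_step_le)
  also have "\<dots> \<le> step_factor (l + d) * ((\<Prod>q<d. step_factor (l + q)) * norm v)"
    using Suc step_factor_pos[of "l + d"] by (intro mult_left_mono) auto
  finally show ?case by (simp add: mult_ac)
qed simp

text \<open>\<open>noise_gain k j v\<close> is the contribution of a perturbation \<open>v\<close> entering after step \<open>j\<close>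
  to the weighted sum \<open>\<Sum>\<^sub>i\<^sub>\<le>\<^sub>k p\<^sub>i w\<^sub>i\<close>.\<close>
definition noise_gain :: "nat \<Rightarrow> nat \<Rightarrow> real^'d \<Rightarrow> real^'d" where
  "noise_gain k j v = (\<Sum>d<k - j. wp gam eta (Suc j + d) *\<^sub>R propagate (Suc j) d v)"

lemma linear_noise_gain: "linear (noise_gain k j)"
  by (rule linearI) (simp_all add: noise_gain_def linear_add[OF linear_propagate]
      linear_scale[OF linear_propagate] scaleR_add_right sum.distrib scaleR_sum_right mult.commute)

lemma shrink_prod_add: "shrink_prod (l + d) = shrink_prod l * (\<Prod>q<d. shrink (l + q))"
  by (induct d) (simp_all add: shrink_prod_def mult_ac)

text \<open>The weights \<open>p\<^sub>i\<close> times the contraction factors telescope, so the total gain never exceeds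
  \<open>\<lambda>/(\<lambda>+\<alpha>)\<close> times the remaining shrink product.\<close>
lemma norm_noise_gain_le: "norm (noise_gain k j v) \<le> lam / (lam + \<alpha>) * shrink_prod (Suc j) * norm v"
proof -
  define l where "l = Suc j"
  define f where "f q = shrink (l + q) * step_factor (l + q)" for q
  have f_nonneg: "f q \<ge> 0" for q unfolding f_def using shrink_pos step_factor_pos by (simp add: less_imp_le)
  have "norm (noise_gain k j v) \<le> (\<Sum>d<k - j. wp gam eta (l + d) * ((\<Prod>q<d. step_factor (l + q)) * norm v))"
    unfolding noise_gain_def l_def
    by (rule order_trans[OF norm_sum sum_mono])
      (auto simp del: add_Suc simp: wp_eq gam_pos shrink_prod_pos lam_pos less_imp_le
        intro!: mult_left_mono norm_propagate_le)
  also have "\<dots> = lam / (lam + \<alpha>) * shrink_prod l * norm v * (\<Sum>d<k - j. (1 - f d) * (\<Prod>q<d. f q))"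
  proof -
    have "wp gam eta (l + d) * ((\<Prod>q<d. step_factor (l + q)) * norm v)
        = lam / (lam + \<alpha>) * shrink_prod l * norm v * ((1 - f d) * (\<Prod>q<d. f q))" for d
    proof -
      have f1: "1 - f d = gam (l + d) * (lam + \<alpha>)"
        unfolding f_def step_factor_def using shrink_eq gam_eq by (simp add: algebra_simps)
      have f2: "(\<Prod>q<d. f q) = (\<Prod>q<d. shrink (l + q)) * (\<Prod>q<d. step_factor (l + q))"
        unfolding f_def by (simp add: prod.distrib)
      have "lam + \<alpha> > 0" using alpha_pos lam_pos by simp
      then show ?thesis unfolding wp_eq shrink_prod_add f1 f2 by (simp add: field_simps)
    qed
    then show ?thesis by (simp add: sum_distrib_left)
  qed
  also have "\<dots> \<le> lam / (lam + \<alpha>) * shrink_prod l * norm v"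
    using lam_pos alpha_pos shrink_prod_pos[of l] f_nonneg
    by (intro mult_left_le) (simp_all add: sum_telescope_prod prod_nonneg)
  finally show ?thesis unfolding l_def .
qed

definition noise_coeff :: "nat \<Rightarrow> real" where
  "noise_coeff j = lam / (lam + \<alpha>) * shrink_prod (Suc j) * eta j"

lemma gam_le: "gam k \<le> 1 / (lam + \<beta>)"
proof -
  have "eta k * (lam + \<beta>) \<le> 1 + lam * eta k" using eta_k_beta[of k] by (simp add: algebra_simps)
  then show ?thesis unfolding gam_def using denom_pos[of k] beta_pos lam_pos by (simp add: field_simps)
qed

lemma noise_coeff_sq_le:
  "(noise_coeff j)\<^sup>2 \<le> (lam / ((lam + \<alpha>) * (lam + \<beta>)))\<^sup>2 * (rho\<^sup>2) ^ j"
proof -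
  have eq: "noise_coeff j = lam / (lam + \<alpha>) * gam j * shrink_prod j"
    unfolding noise_coeff_def shrink_prod_def gam_eq by (simp add: mult_ac)
  have l: "lam / (lam + \<alpha>) \<ge> 0" using lam_pos alpha_pos by simp
  have "noise_coeff j \<le> lam / (lam + \<alpha>) * (1 / (lam + \<beta>)) * rho ^ j"
    unfolding eq using gam_le[of j] shrink_prod_le[of j] gam_pos[of j] shrink_prod_pos[of j] l
      alpha_pos beta_pos lam_pos
    by (intro mult_mono) (auto intro!: divide_nonneg_nonneg mult_nonneg_nonneg)
  moreover have "noise_coeff j \<ge> 0"
    unfolding eq using gam_pos[of j] shrink_prod_pos[of j] l
    by (intro mult_nonneg_nonneg) (auto simp: less_imp_le)
  ultimately have "(noise_coeff j)\<^sup>2 \<le> (lam / ((lam + \<alpha>) * (lam + \<beta>)) * rho ^ j)\<^sup>2"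
    by (intro power_mono) auto
  also have "\<dots> = (lam / ((lam + \<alpha>) * (lam + \<beta>)))\<^sup>2 * (rho\<^sup>2) ^ j"
    unfolding power_mult_distrib by (metis power_even_eq power_mult)
  finally show ?thesis .
qed

lemma gam_min_pos: "gam_min > 0"
  unfolding gam_min_def using eta_pos denom_min_pos by simp

lemma gam_min_mult_lt: "gam_min * (lam + \<beta>) < 1"
proof -
  have "\<eta> * \<beta> \<le> eta 0 * \<beta>" using eta_bnd beta_pos by (simp add: mult_right_mono)
  then have "\<eta> * (lam + \<beta>) < 1 + lam * \<eta>" using eta_k_beta[of 0] by (simp add: algebra_simps)
  then show ?thesis unfolding gam_min_def using denom_min_pos by (simp add: field_simps)
qed

lemma lam_gam_min_less_1: "lam * gam_min < 1"
  using gam_min_mult_lt mult_pos_pos[OF gam_min_pos beta_pos] by (simp add: algebra_simps)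

definition conf_radius :: "real \<Rightarrow> real \<Rightarrow> real" where
  "conf_radius \<sigma> \<delta> = \<sigma> / (gam_min * (lam + \<alpha>) * (lam + \<beta>)\<^sup>2)
     * sqrt (lam / (\<delta> * gam_min * (2 - lam * gam_min)))"

lemma conf_radius_nonneg: "\<sigma> \<ge> 0 \<Longrightarrow> \<delta> > 0 \<Longrightarrow> conf_radius \<sigma> \<delta> \<ge> 0"
  unfolding conf_radius_def using gam_min_pos lam_pos alpha_pos beta_pos lam_gam_min_less_1
  by (intro mult_nonneg_nonneg divide_nonneg_nonneg) auto

text \<open>The geometric series \<open>\<Sum> \<rho>\<^sup>2\<^sup>j = 1/(\<lambda>\<gamma>(2 - \<lambda>\<gamma>))\<close> is where the last factor of the
  confidence radius comes from.\<close>
lemma noise_coeff_sum_le_conf_radius: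
  assumes "\<delta> > 0"
  shows "\<sigma>\<^sup>2 * (\<Sum>j<k. (noise_coeff j)\<^sup>2) \<le> (conf_radius \<sigma> \<delta>)\<^sup>2 * \<delta>"
proof -
  define X where "X = lam * gam_min"
  define Q where "Q = \<sigma>\<^sup>2 * lam / (gam_min * (2 - X))"
  define D where "D = gam_min * (lam + \<alpha>) * (lam + \<beta>)\<^sup>2"
  define E where "E = (lam + \<alpha>) * (lam + \<beta>)"
  have X: "0 < X" "X < 1"
    using lam_gam_min_less_1 gam_min_pos lam_pos unfolding X_def by auto
  have pos: "lam + \<alpha> > 0" "lam + \<beta> > 0" "E > 0" "D > 0"
    using lam_pos alpha_pos beta_pos gam_min_pos unfolding E_def D_def by auto
  have "rho * rho < 1 * 1" using rho_pos rho_less_1 by (intro mult_strict_mono) auto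
  then have rho2: "rho\<^sup>2 < 1" "rho\<^sup>2 \<ge> 0" by (simp_all add: power2_eq_square)
  have one_minus_rho2: "1 - rho\<^sup>2 = lam * gam_min * (2 - X)"
    by (simp add: power2_eq_square rho_def X_def algebra_simps)
  have "(\<Sum>j<k. (noise_coeff j)\<^sup>2) \<le> (\<Sum>j<k. (lam / E)\<^sup>2 * (rho\<^sup>2) ^ j)"
    unfolding E_def by (intro sum_mono noise_coeff_sq_le)
  also have "\<dots> = (lam / E)\<^sup>2 * ((1 - (rho\<^sup>2) ^ k) / (1 - rho\<^sup>2))"
    using rho2 by (simp add: sum_distrib_left[symmetric] sum_gp_strict)
  also have "\<dots> \<le> (lam / E)\<^sup>2 / (1 - rho\<^sup>2)"
    using rho2 by (simp add: divide_right_mono mult_left_le)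
  finally have "\<sigma>\<^sup>2 * (\<Sum>j<k. (noise_coeff j)\<^sup>2) \<le> \<sigma>\<^sup>2 * ((lam / E)\<^sup>2 / (1 - rho\<^sup>2))"
    by (intro mult_left_mono) auto
  also have "\<dots> = Q * (1 / E)\<^sup>2"
    unfolding one_minus_rho2 Q_def using lam_pos gam_min_pos X pos
    by (simp add: power_divide field_simps power2_eq_square)
  also have "\<dots> \<le> Q * (1 / D)\<^sup>2"
  proof (intro mult_left_mono power_mono divide_left_mono)
    have "D = (gam_min * (lam + \<beta>)) * E" unfolding D_def E_def by (simp add: power2_eq_square mult_ac)
    also have "\<dots> \<le> 1 * E" using gam_min_mult_lt pos by (intro mult_right_mono) auto
    finally show "D \<le> E" by simp
  qed (use pos lam_pos gam_min_pos X in \<open>auto simp: Q_def\<close>)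
  also have "\<dots> = (conf_radius \<sigma> \<delta>)\<^sup>2 * \<delta>"
  proof -
    have "lam / (\<delta> * gam_min * (2 - X)) \<ge> 0" using assms gam_min_pos lam_pos X by simp
    then have "(conf_radius \<sigma> \<delta>)\<^sup>2 = (\<sigma> / D)\<^sup>2 * (lam / (\<delta> * gam_min * (2 - X)))"
      unfolding conf_radius_def D_def X_def power_mult_distrib by simp
    then show ?thesis unfolding Q_def using assms gam_min_pos X pos
      by (simp add: power_divide field_simps)
  qed
  finally show ?thesis .
qed

end

section \<open>Uniformly random index sequences\<close>

locale uniform_indices = prob_space M for M :: "'a measure" +
  fixes \<xi> :: "nat \<Rightarrow> 'a \<Rightarrow> nat" and n :: nat
  assumes n_pos: "n > 0"
    and indep: "indep_vars (\<lambda>_. count_space UNIV) \<xi> {1..}"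
    and unif: "\<forall>k\<ge>1. \<forall>i<n. prob {\<omega> \<in> space M. \<xi> k \<omega> = i} = 1 / real n"
begin

text \<open>Functions of the first \<open>k\<close> indices are modelled as functions of a whole index sequence
  \<open>s :: nat \<Rightarrow> nat\<close> that only look at \<open>s 1, \<dots>, s k\<close>; their expectation is then the uniform
  average \<open>seq_mean k\<close> over \<open>{..<n}\<^sup>k\<close>.\<close>

definition index_seq :: "'a \<Rightarrow> nat \<Rightarrow> nat" where "index_seq \<omega> = (\<lambda>i. \<xi> i \<omega>)"

definition index_seqs :: "nat \<Rightarrow> (nat \<Rightarrow> nat) set" where
  "index_seqs k = PiE {1..k} (\<lambda>_. {..<n})"

definition index_event :: "nat \<Rightarrow> (nat \<Rightarrow> nat) \<Rightarrow> 'a set" where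
  "index_event k s = {\<omega> \<in> space M. \<forall>i\<in>{1..k}. \<xi> i \<omega> = s i}"

definition determined :: "nat \<Rightarrow> ((nat \<Rightarrow> nat) \<Rightarrow> 'b) \<Rightarrow> bool" where
  "determined k f \<longleftrightarrow> (\<forall>s t. (\<forall>i\<in>{1..k}. s i = t i) \<longrightarrow> f s = f t)"

definition seq_mean :: "nat \<Rightarrow> ((nat \<Rightarrow> nat) \<Rightarrow> 'b::real_vector) \<Rightarrow> 'b" where
  "seq_mean k f = (1 / real n) ^ k *\<^sub>R (\<Sum>s\<in>index_seqs k. f s)"

lemma finite_index_seqs: "finite (index_seqs k)"
  unfolding index_seqs_def by (intro finite_PiE) auto

lemma card_index_seqs: "card (index_seqs k) = n ^ k"
  unfolding index_seqs_def by (subst card_PiE) auto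

lemma determined_mono: "determined k f \<Longrightarrow> k \<le> k' \<Longrightarrow> determined k' f"
  unfolding determined_def by auto

lemma determined_comp: "determined k f \<Longrightarrow> determined k (\<lambda>s. g (f s))"
  unfolding determined_def by metis

lemma determined_upd: "determined k f \<Longrightarrow> f (s(Suc k := j)) = f s"
  unfolding determined_def by auto

lemma measurable_xi: "i \<ge> 1 \<Longrightarrow> \<xi> i \<in> measurable M (count_space UNIV)"
  using indep unfolding indep_vars_def by auto

lemma sets_xi_eq:
  assumes "i \<ge> 1" shows "{\<omega> \<in> space M. \<xi> i \<omega> = j} \<in> sets M"
proof -
  have "\<xi> i -` {j} \<inter> space M \<in> sets M"
    using measurable_xi[OF assms] by (simp add: measurable_count_space_eq2_countable)
  moreover have "\<xi> i -` {j} \<inter> space M = {\<omega> \<in> space M. \<xi> i \<omega> = j}" by auto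
  ultimately show ?thesis by simp
qed

lemma sets_index_event: "index_event k s \<in> sets M"
  unfolding index_event_def
  by (cases "k = 0") (auto intro!: sets.sets_Collect_finite_All' sets_xi_eq)

lemma prob_index_event:
  assumes "s \<in> index_seqs k" shows "prob (index_event k s) = (1 / real n) ^ k"
proof (cases "k = 0")
  case True
  then show ?thesis unfolding index_event_def by (simp add: prob_space)
next
  case False
  have ind: "indep_sets (\<lambda>i. {\<xi> i -` A \<inter> space M | A. A \<in> sets (count_space (UNIV::nat set))}) {1..}"
    using indep unfolding indep_vars_def2 by auto
  have "index_event k s = (\<Inter>i\<in>{1..k}. \<xi> i -` {s i} \<inter> space M)"
    using False unfolding index_event_def by auto
  then have "prob (index_event k s) = prob (\<Inter>i\<in>{1..k}. \<xi> i -` {s i} \<inter> space M)" by simp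
  also have "\<dots> = (\<Prod>i\<in>{1..k}. prob (\<xi> i -` {s i} \<inter> space M))"
    using False by (intro indep_setsD[OF ind]) auto
  also have "\<dots> = (\<Prod>i\<in>{1..k}. 1 / real n)"
  proof (rule prod.cong)
    fix i assume i: "i \<in> {1..k}"
    have "\<xi> i -` {s i} \<inter> space M = {\<omega> \<in> space M. \<xi> i \<omega> = s i}" by auto
    moreover have "s i < n" using assms i unfolding index_seqs_def by auto
    ultimately show "prob (\<xi> i -` {s i} \<inter> space M) = 1 / real n" using unif i by auto
  qed simp
  finally show ?thesis by simp
qed

lemma AE_index_less: "AE \<omega> in M. \<forall>i\<in>{1..k}. \<xi> i \<omega> < n"
proof (rule AE_finite_allI)
  fix i assume i: "i \<in> {1..k}"
  have "{\<omega> \<in> space M. \<xi> i \<omega> < n} = (\<Union>j<n. {\<omega> \<in> space M. \<xi> i \<omega> = j})" by auto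
  then have "prob {\<omega> \<in> space M. \<xi> i \<omega> < n} = (\<Sum>j<n. prob {\<omega> \<in> space M. \<xi> i \<omega> = j})"
    using i sets_xi_eq by (auto intro!: finite_measure_finite_Union simp: disjoint_family_on_def)
  also have "\<dots> = 1" using unif i n_pos by simp
  finally have "AE \<omega> in M. \<omega> \<in> {\<omega> \<in> space M. \<xi> i \<omega> < n}" by (rule AE_prob_1)
  then show "AE \<omega> in M. \<xi> i \<omega> < n" by auto
qed simp

lemma measurable_determined:
  fixes f :: "(nat \<Rightarrow> nat) \<Rightarrow> 'b::topological_space"
  assumes f: "determined k f" shows "(\<lambda>\<omega>. f (index_seq \<omega>)) \<in> borel_measurable M"
proof -
  let ?X = "PiE {1..k} (\<lambda>_. UNIV :: nat set)"
  let ?r = "\<lambda>\<omega>. restrict (index_seq \<omega>) {1..k}"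
  have "?r \<in> measurable M (count_space ?X)"
  proof (subst measurable_count_space_eq_countable)
    show "countable ?X" by (intro countable_PiE) auto
    have "?r -` {s} \<inter> space M = index_event k s" if "s \<in> ?X" for s
      using that unfolding index_seq_def index_event_def
      by (auto simp: PiE_def extensional_def restrict_def fun_eq_iff)
    then show "?r \<in> space M \<rightarrow> ?X \<and> (\<forall>s\<in>?X. ?r -` {s} \<inter> space M \<in> sets M)"
      using sets_index_event by auto
  qed
  then have "(\<lambda>\<omega>. f (?r \<omega>)) \<in> borel_measurable M"
    by (rule measurable_compose) simp
  moreover have "f (?r \<omega>) = f (index_seq \<omega>)" for \<omega>
    using f unfolding determined_def by auto
  ultimately show ?thesis by simp
qed

lemma AE_determined_eq_sum:
  fixes f :: "(nat \<Rightarrow> nat) \<Rightarrow> 'b::real_vector"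
  assumes f: "determined k f"
  shows "AE \<omega> in M. f (index_seq \<omega>) = (\<Sum>s\<in>index_seqs k. indicator (index_event k s) \<omega> *\<^sub>R f s)"
  using AE_index_less[of k] AE_space
proof eventually_elim
  case (elim \<omega>)
  define r where "r = restrict (index_seq \<omega>) {1..k}"
  have r: "r \<in> index_seqs k" using elim unfolding r_def index_seq_def index_seqs_def by auto
  have "\<omega> \<in> index_event k s \<longleftrightarrow> s = r" if "s \<in> index_seqs k" for s
    using that elim unfolding index_event_def r_def index_seq_def index_seqs_def
    by (auto simp: PiE_def extensional_def restrict_def fun_eq_iff)
  then have "(\<Sum>s\<in>index_seqs k. indicator (index_event k s) \<omega> *\<^sub>R f s)
      = (\<Sum>s\<in>index_seqs k. if s = r then f s else 0)"
    by (intro sum.cong) (auto simp: indicator_def)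
  also have "\<dots> = f r" using r finite_index_seqs by simp
  also have "\<dots> = f (index_seq \<omega>)" using f unfolding r_def determined_def by auto
  finally show ?case by simp
qed

lemma
  fixes f :: "(nat \<Rightarrow> nat) \<Rightarrow> 'b::{banach,second_countable_topology}"
  assumes f: "determined k f"
  shows integrable_determined: "integrable M (\<lambda>\<omega>. f (index_seq \<omega>))"
    and integral_determined: "(\<integral>\<omega>. f (index_seq \<omega>) \<partial>M) = seq_mean k f"
proof -
  let ?g = "\<lambda>\<omega>. \<Sum>s\<in>index_seqs k. indicator (index_event k s) \<omega> *\<^sub>R f s"
  have int: "integrable M (\<lambda>\<omega>. indicator (index_event k s) \<omega> *\<^sub>R f s)" for s
    using sets_index_event by (simp add: emeasure_eq_measure)
  then have "integrable M ?g" by simp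
  then show "integrable M (\<lambda>\<omega>. f (index_seq \<omega>))"
    by (rule integrable_cong_AE_imp[OF _ measurable_determined[OF f]])
      (use AE_determined_eq_sum[OF f] in \<open>auto elim: AE_mp\<close>)
  have "?g \<in> borel_measurable M" using sets_index_event by measurable
  then have "(\<integral>\<omega>. f (index_seq \<omega>) \<partial>M) = integral\<^sup>L M ?g"
    by (intro integral_cong_AE measurable_determined[OF f] AE_determined_eq_sum[OF f])
  also have "\<dots> = (\<Sum>s\<in>index_seqs k. prob (index_event k s) *\<^sub>R f s)"
  proof -
    have "(\<integral>\<omega>. indicator (index_event k s) \<omega> *\<^sub>R f s \<partial>M) = prob (index_event k s) *\<^sub>R f s" for s
      using sets_index_event[of k s]
      by (subst integral_scaleR_left) (auto simp: emeasure_eq_measure Int_absorb2 sets.sets_into_space)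
    then show ?thesis using int by (simp add: Bochner_Integration.integral_sum)
  qed
  also have "\<dots> = seq_mean k f"
    unfolding seq_mean_def scaleR_sum_right by (intro sum.cong) (simp_all add: prob_index_event)
  finally show "(\<integral>\<omega>. f (index_seq \<omega>) \<partial>M) = seq_mean k f" .
qed

lemma seq_mean_determined_mono:
  fixes f :: "(nat \<Rightarrow> nat) \<Rightarrow> 'b::{banach,second_countable_topology}"
  assumes "determined k f" "k \<le> k'"
  shows "seq_mean k' f = seq_mean k f"
  using integral_determined[OF assms(1)] integral_determined[OF determined_mono[OF assms]] by simp

lemma sum_index_seqs_Suc:
  "(\<Sum>s\<in>index_seqs (Suc k). F s) = (\<Sum>s\<in>index_seqs k. \<Sum>j<n. F (s(Suc k := j)))"
proof -
  have "{1..Suc k} = insert (Suc k) {1..k}" by auto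
  then have eq: "index_seqs (Suc k) = (\<lambda>(j, s). s(Suc k := j)) ` ({..<n} \<times> index_seqs k)"
    unfolding index_seqs_def by (simp add: PiE_insert_eq)
  have "inj_on (\<lambda>(j, s). s(Suc k := j)) ({..<n} \<times> index_seqs k)"
    unfolding index_seqs_def by (rule inj_combinator) simp
  then have "(\<Sum>s\<in>index_seqs (Suc k). F s) = (\<Sum>(j, s)\<in>{..<n} \<times> index_seqs k. F (s(Suc k := j)))"
    unfolding eq by (subst sum.reindex) (simp_all add: case_prod_beta)
  also have "\<dots> = (\<Sum>s\<in>index_seqs k. \<Sum>j<n. F (s(Suc k := j)))"
    by (simp add: sum.cartesian_product[symmetric] sum.swap[of _ "{..<n}"])
  finally show ?thesis .
qed

lemma seq_mean_Suc:
  "seq_mean (Suc k) f = seq_mean k (\<lambda>s. (1 / real n) *\<^sub>R (\<Sum>j<n. f (s(Suc k := j))))"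
  unfolding seq_mean_def sum_index_seqs_Suc by (simp add: scaleR_sum_right)

lemma seq_mean_add: "seq_mean k (\<lambda>s. f s + g s) = seq_mean k f + seq_mean k g"
  unfolding seq_mean_def by (simp add: sum.distrib scaleR_add_right)

lemma seq_mean_diff: "seq_mean k (\<lambda>s. f s - g s) = seq_mean k f - seq_mean k g"
  unfolding seq_mean_def by (simp add: sum_subtractf scaleR_diff_right)

lemma seq_mean_scaleR: "seq_mean k (\<lambda>s. c *\<^sub>R f s) = c *\<^sub>R seq_mean k f"
  unfolding seq_mean_def by (simp add: scaleR_sum_right mult.commute)

lemma seq_mean_sum: "seq_mean k (\<lambda>s. \<Sum>i\<in>I. f i s) = (\<Sum>i\<in>I. seq_mean k (f i))"
  unfolding seq_mean_def by (simp add: scaleR_sum_right sum.swap[of _ I])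

lemma seq_mean_linear: "linear L \<Longrightarrow> seq_mean k (\<lambda>s. L (f s)) = L (seq_mean k f)"
  unfolding seq_mean_def by (simp add: linear_sum linear_scale)

lemma seq_mean_const: "seq_mean k (\<lambda>s. c) = c"
  unfolding seq_mean_def using n_pos by (simp add: card_index_seqs power_one_over sum_constant_scaleR)

lemma seq_mean_mono:
  fixes f g :: "(nat \<Rightarrow> nat) \<Rightarrow> real"
  assumes "\<And>s. s \<in> index_seqs k \<Longrightarrow> f s \<le> g s" shows "seq_mean k f \<le> seq_mean k g"
  unfolding seq_mean_def using assms by (auto intro!: mult_left_mono sum_mono)

lemma mean_index_const: "(1 / real n) *\<^sub>R (\<Sum>j<n. c) = (c :: 'b::real_vector)"
  using n_pos by (simp add: sum_constant_scaleR)

lemma mean_index_step: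
  "(1 / real n) *\<^sub>R (\<Sum>j<n. (v::'b::real_vector) - t *\<^sub>R G j) = v - t *\<^sub>R ((1 / real n) *\<^sub>R (\<Sum>j<n. G j))"
  using mean_index_const[of v] by (simp add: sum_subtractf scaleR_sum_right scaleR_diff_right)

lemma mean_index_add_const:
  "(1 / real n) *\<^sub>R (\<Sum>j<n. G j + (c::'b::real_vector)) = (1 / real n) *\<^sub>R (\<Sum>j<n. G j) + c"
  using mean_index_const[of c] by (simp add: sum.distrib scaleR_add_right)

lemma measure_determined:
  assumes "determined k Q"
  shows "measure M {\<omega> \<in> space M. Q (index_seq \<omega>)} = seq_mean k (\<lambda>s. if Q s then 1 else 0 :: real)"
proof -
  have d: "determined k (\<lambda>s. if Q s then 1 else 0 :: real)"
    using assms by (rule determined_comp)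
  have "{\<omega> \<in> space M. Q (index_seq \<omega>)} = (\<lambda>\<omega>. if Q (index_seq \<omega>) then 1 else 0 :: real) -` {1} \<inter> space M"
    by (auto split: if_splits)
  then have "{\<omega> \<in> space M. Q (index_seq \<omega>)} \<in> sets M"
    using measurable_sets[OF measurable_determined[OF d], of "{1}"] by simp
  then have "measure M {\<omega> \<in> space M. Q (index_seq \<omega>)}
      = (\<integral>\<omega>. indicator {\<omega> \<in> space M. Q (index_seq \<omega>)} \<omega> \<partial>M)"
    by (simp add: Int_absorb2)
  also have "\<dots> = (\<integral>\<omega>. (if Q (index_seq \<omega>) then 1 else 0 :: real) \<partial>M)"
    by (rule Bochner_Integration.integral_cong) (auto simp: indicator_def)
  also have "\<dots> = seq_mean k (\<lambda>s. if Q s then 1 else 0 :: real)"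
    by (rule integral_determined[OF d])
  finally show ?thesis .
qed

lemma seq_mean_nonneg_eq_0:
  fixes f :: "(nat \<Rightarrow> nat) \<Rightarrow> real"
  assumes "\<And>s. f s \<ge> 0" "seq_mean k f \<le> 0" "s \<in> index_seqs k"
  shows "f s = 0"
proof -
  have "(1 / real n) ^ k * (\<Sum>s\<in>index_seqs k. f s) \<le> 0" using assms(2) by (simp add: seq_mean_def)
  moreover have "(1 / real n) ^ k > 0" using n_pos by simp
  ultimately have "(\<Sum>s\<in>index_seqs k. f s) \<le> 0" by (simp add: mult_le_0_iff)
  then have "(\<Sum>s\<in>index_seqs k. f s) = 0" using assms(1) by (simp add: antisym sum_nonneg)
  then show ?thesis using assms(1,3) sum_nonneg_eq_0_iff[OF finite_index_seqs] by blast
qed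

lemma seq_mean_chebyshev:
  fixes Z :: "(nat \<Rightarrow> nat) \<Rightarrow> 'b::real_normed_vector"
  assumes E: "seq_mean k (\<lambda>s. (norm (Z s))\<^sup>2) \<le> t\<^sup>2 * \<delta>" and "t \<ge> 0" "\<delta> \<ge> 0"
  shows "seq_mean k (\<lambda>s. if norm (Z s) \<le> t then 1 else 0 :: real) \<ge> 1 - \<delta>"
proof (cases "t = 0")
  case False
  then have tp: "t > 0" using \<open>t \<ge> 0\<close> by simp
  have "1 - (norm (Z s))\<^sup>2 / t\<^sup>2 \<le> (if norm (Z s) \<le> t then 1 else 0)" for s
  proof (cases "norm (Z s) \<le> t")
    case False
    then have "t\<^sup>2 \<le> (norm (Z s))\<^sup>2" using tp by (intro power_mono) auto
    then show ?thesis using False tp by simp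
  qed (use tp in simp)
  then have "seq_mean k (\<lambda>s. 1 - (norm (Z s))\<^sup>2 / t\<^sup>2) \<le> seq_mean k (\<lambda>s. if norm (Z s) \<le> t then 1 else 0)"
    by (intro seq_mean_mono)
  moreover have "seq_mean k (\<lambda>s. 1 - (norm (Z s))\<^sup>2 / t\<^sup>2) = 1 - seq_mean k (\<lambda>s. (norm (Z s))\<^sup>2) / t\<^sup>2"
    using seq_mean_diff[of k "\<lambda>s. 1" "\<lambda>s. (norm (Z s))\<^sup>2 / t\<^sup>2"]
      seq_mean_scaleR[of k "1 / t\<^sup>2" "\<lambda>s. (norm (Z s))\<^sup>2"]
    by (simp add: seq_mean_const)
  moreover have "seq_mean k (\<lambda>s. (norm (Z s))\<^sup>2) / t\<^sup>2 \<le> \<delta>" using E tp by (simp add: field_simps)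
  ultimately show ?thesis by linarith
next
  case True
  then have "(norm (Z s))\<^sup>2 = 0" if "s \<in> index_seqs k" for s
    using E that by (intro seq_mean_nonneg_eq_0[of "\<lambda>s. (norm (Z s))\<^sup>2"]) auto
  then have "seq_mean k (\<lambda>s. 1) \<le> seq_mean k (\<lambda>s. if norm (Z s) \<le> t then 1 else 0 :: real)"
    using True by (intro seq_mean_mono) auto
  then show ?thesis using \<open>\<delta> \<ge> 0\<close> by (simp add: seq_mean_const)
qed

end

section \<open>Mean and fluctuation of the SGD paths\<close>

locale sgd_setting =
  uniform_indices M \<xi> n + gd_setting "data_Sigma x n" "data_a x y n" \<alpha> \<beta> lam \<eta> eta
  for M :: "'a measure" and \<xi> n and x :: "nat \<Rightarrow> real^'d" and y \<alpha> \<beta> lam \<eta> eta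
begin

text \<open>The SGD recursions run on the space of index sequences themselves, with \<open>\<xi> i s = s i\<close>.\<close>

definition path :: "(nat \<Rightarrow> nat) \<Rightarrow> nat \<Rightarrow> real^'d" where
  "path s k = sgd_w x y eta (\<lambda>i t. t i) k s"

definition ridge_path :: "(nat \<Rightarrow> nat) \<Rightarrow> nat \<Rightarrow> real^'d" where
  "ridge_path s k = sgd_ridge x y lam gam (\<lambda>i t. t i) k s"

lemma sgd_w_eq_path: "sgd_w x y eta \<xi> k = (\<lambda>\<omega>. path (index_seq \<omega>) k)"
  unfolding path_def by (rule ext, induct k) (simp_all add: index_seq_def Let_def)

lemma sgd_ridge_eq_ridge_path: "sgd_ridge x y lam gam \<xi> k = (\<lambda>\<omega>. ridge_path (index_seq \<omega>) k)"
  unfolding ridge_path_def by (rule ext, induct k) (simp_all add: index_seq_def Let_def)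

lemma determined_path: "determined k (\<lambda>s. path s k)"
proof (induct k)
  case (Suc k)
  show ?case unfolding determined_def
  proof (intro allI impI)
    fix s t :: "nat \<Rightarrow> nat" assume st: "\<forall>i\<in>{1..Suc k}. s i = t i"
    then have "path s k = path t k" using Suc unfolding determined_def by auto
    moreover have "s (Suc k) = t (Suc k)" using st by auto
    ultimately show "path s (Suc k) = path t (Suc k)" by (simp add: path_def Let_def)
  qed
qed (simp add: determined_def path_def)

lemma determined_ridge_path: "determined k (\<lambda>s. ridge_path s k)"
proof (induct k)
  case (Suc k)
  show ?case unfolding determined_def
  proof (intro allI impI)
    fix s t :: "nat \<Rightarrow> nat" assume st: "\<forall>i\<in>{1..Suc k}. s i = t i"
    then have "ridge_path s k = ridge_path t k" using Suc unfolding determined_def by auto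
    moreover have "s (Suc k) = t (Suc k)" using st by auto
    ultimately show "ridge_path s (Suc k) = ridge_path t (Suc k)" by (simp add: ridge_path_def Let_def)
  qed
qed (simp add: determined_def ridge_path_def)

lemma path_Suc_upd:
  "path (s(Suc k := j)) (Suc k) = path s k - eta k *\<^sub>R (outer (x j) (x j) *v path s k - y j *\<^sub>R x j)"
  using determined_upd[OF determined_path[of k], of s j] by (simp add: path_def Let_def)

lemma ridge_path_Suc_upd:
  "ridge_path (s(Suc k := j)) (Suc k)
     = ridge_path s k - gam k *\<^sub>R (outer (x j) (x j) *v ridge_path s k - y j *\<^sub>R x j + lam *\<^sub>R ridge_path s k)"
  using determined_upd[OF determined_ridge_path[of k], of s j] by (simp add: ridge_path_def Let_def)

lemma mean_data_gradient:
  "(1 / real n) *\<^sub>R (\<Sum>j<n. outer (x j) (x j) *v v - y j *\<^sub>R x j) = data_Sigma x n *v v - data_a x y n"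
  unfolding data_Sigma_def data_a_def
  by (simp add: scaleR_matrix_vector_assoc[symmetric] sum_matrix_vector_mult sum_subtractf
      scaleR_diff_right)

lemma seq_mean_path: "seq_mean k (\<lambda>s. path s k) = gd k"
proof (induct k)
  case 0
  then show ?case by (simp add: path_def seq_mean_const)
next
  case (Suc k)
  have "seq_mean (Suc k) (\<lambda>s. path s (Suc k))
      = seq_mean k (\<lambda>s. path s k - eta k *\<^sub>R (data_Sigma x n *v path s k - data_a x y n))"
    unfolding seq_mean_Suc path_Suc_upd mean_index_step mean_data_gradient ..
  also have "\<dots> = gd (Suc k)"
    by (simp add: seq_mean_diff seq_mean_scaleR seq_mean_const Suc
        seq_mean_linear[OF matrix_vector_mul_linear])
  finally show ?case .
qed

lemma seq_mean_ridge_path: "seq_mean k (\<lambda>s. ridge_path s k) = ridge_gd k"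
proof (induct k)
  case 0
  then show ?case by (simp add: ridge_path_def seq_mean_const)
next
  case (Suc k)
  have "seq_mean (Suc k) (\<lambda>s. ridge_path s (Suc k))
      = seq_mean k (\<lambda>s. ridge_path s k - gam k *\<^sub>R (data_Sigma x n *v ridge_path s k - data_a x y n
                                                   + lam *\<^sub>R ridge_path s k))"
    unfolding seq_mean_Suc ridge_path_Suc_upd mean_index_step mean_index_add_const mean_data_gradient ..
  also have "\<dots> = ridge_gd (Suc k)"
    by (simp add: seq_mean_diff seq_mean_add seq_mean_scaleR seq_mean_const Suc
        seq_mean_linear[OF matrix_vector_mul_linear])
  finally show ?case .
qed

lemma integrable_sgd_w: "integrable M (sgd_w x y eta \<xi> k)"
  unfolding sgd_w_eq_path by (rule integrable_determined[OF determined_path])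

lemma integral_sgd_w: "integral\<^sup>L M (sgd_w x y eta \<xi> k) = gd k"
  unfolding sgd_w_eq_path integral_determined[OF determined_path] seq_mean_path ..

lemma integral_sgd_ridge: "integral\<^sup>L M (sgd_ridge x y lam gam \<xi> k) = ridge_gd k"
  unfolding sgd_ridge_eq_ridge_path integral_determined[OF determined_ridge_path] seq_mean_ridge_path ..

lemma integral_avg_w:
  "integral\<^sup>L M (avg_w gam eta (sgd_w x y eta \<xi>) k)
     = (1 / wP gam eta k) *\<^sub>R (\<Sum>i\<le>k. wp gam eta i *\<^sub>R gd i)"
proof -
  have "avg_w gam eta (sgd_w x y eta \<xi>) k
      = (\<lambda>\<omega>. (1 / wP gam eta k) *\<^sub>R (\<Sum>i\<le>k. wp gam eta i *\<^sub>R sgd_w x y eta \<xi> i \<omega>))"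
    by (simp add: avg_w_def fun_eq_iff)
  then show ?thesis
    by (simp add: integrable_sgd_w integral_sgd_w Bochner_Integration.integral_sum)
qed

lemma expected_avg_w_identity:
  "wP gam eta k *\<^sub>R integral\<^sup>L M (avg_w gam eta (sgd_w x y eta \<xi>) k)
     = integral\<^sup>L M (sgd_ridge x y lam gam \<xi> k) - (1 - wP gam eta k) *\<^sub>R integral\<^sup>L M (sgd_w x y eta \<xi> k)"
  unfolding integral_avg_w integral_sgd_ridge integral_sgd_w
  using wP_pos[of k] by (simp add: weighted_gd_sum wP_eq)

lemma expected_ridge_minus_avg_w_le:
  "norm (integral\<^sup>L M (sgd_ridge x y lam gam \<xi> k) - integral\<^sup>L M (avg_w gam eta (sgd_w x y eta \<xi>) k))
     \<le> 2 * (norm w_opt + norm w_ridge) / (1 - shrink 0) * (1 - lam * gam_min) ^ k"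
  unfolding integral_avg_w integral_sgd_ridge rho_def[symmetric]
  by (rule ridge_gd_minus_weighted_mean_le)

definition noise :: "nat \<Rightarrow> (nat \<Rightarrow> nat) \<Rightarrow> real^'d" where
  "noise j s = (data_Sigma x n *v path s j - data_a x y n)
     - (outer (x (s (Suc j))) (x (s (Suc j))) *v path s j - y (s (Suc j)) *\<^sub>R x (s (Suc j)))"

lemma determined_noise: "determined (Suc j) (noise j)"
  unfolding determined_def
proof (intro allI impI)
  fix s t :: "nat \<Rightarrow> nat" assume st: "\<forall>i\<in>{1..Suc j}. s i = t i"
  then have "path s j = path t j" using determined_path[of j] unfolding determined_def by auto
  moreover have "s (Suc j) = t (Suc j)" using st by auto
  ultimately show "noise j s = noise j t" unfolding noise_def by simp
qed

lemma mean_noise_upd: "(1 / real n) *\<^sub>R (\<Sum>l<n. noise j (s(Suc j := l))) = 0"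
proof -
  have "noise j (s(Suc j := l))
      = (data_Sigma x n *v path s j - data_a x y n) - (outer (x l) (x l) *v path s j - y l *\<^sub>R x l)" for l
    unfolding noise_def using determined_upd[OF determined_path[of j]] by simp
  then show ?thesis
    using mean_index_step[of "data_Sigma x n *v path s j - data_a x y n" 1
        "\<lambda>l. outer (x l) (x l) *v path s j - y l *\<^sub>R x l"] mean_data_gradient[of "path s j"]
    by simp
qed

lemma path_minus_gd:
  "path s i - gd i = (\<Sum>j<i. propagate (Suc j) (i - Suc j) (eta j *\<^sub>R noise j s))"
proof (induct i)
  case 0
  then show ?case by (simp add: path_def)
next
  case (Suc i)
  let ?step = "\<lambda>u. u - eta i *\<^sub>R (data_Sigma x n *v u)"
  have lin: "linear ?step" by (rule linearI) (simp_all add: algebra_simps)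
  have "path s (Suc i) - gd (Suc i) = ?step (path s i - gd i) + eta i *\<^sub>R noise i s"
    by (simp add: path_def noise_def Let_def algebra_simps matrix_vector_mult_diff_distrib)
  also have "?step (path s i - gd i) = (\<Sum>j<i. propagate (Suc j) (Suc i - Suc j) (eta j *\<^sub>R noise j s))"
  proof -
    have "?step (propagate (Suc j) (i - Suc j) v) = propagate (Suc j) (Suc i - Suc j) v" if "j < i" for j v
      using that by (simp add: Suc_diff_Suc[symmetric])
    then show ?thesis unfolding Suc linear_sum[OF lin] by simp
  qed
  finally show ?case by simp
qed

definition weighted_dev :: "nat \<Rightarrow> (nat \<Rightarrow> nat) \<Rightarrow> real^'d" where
  "weighted_dev k s = (\<Sum>i\<le>k. wp gam eta i *\<^sub>R (path s i - gd i))"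

definition noise_term :: "nat \<Rightarrow> nat \<Rightarrow> (nat \<Rightarrow> nat) \<Rightarrow> real^'d" where
  "noise_term k j s = noise_gain k j (eta j *\<^sub>R noise j s)"

lemma determined_noise_term: "determined (Suc j) (noise_term k j)"
  unfolding noise_term_def by (rule determined_comp[OF determined_noise])

lemma weighted_dev_eq: "weighted_dev k s = (\<Sum>j<k. noise_term k j s)"
proof -
  have "weighted_dev k s
      = (\<Sum>i\<le>k. \<Sum>j<i. wp gam eta i *\<^sub>R propagate (Suc j) (i - Suc j) (eta j *\<^sub>R noise j s))"
    unfolding weighted_dev_def path_minus_gd by (simp add: scaleR_sum_right)
  also have "\<dots> = (\<Sum>j<k. \<Sum>i\<in>{Suc j..k}. wp gam eta i *\<^sub>R propagate (Suc j) (i - Suc j) (eta j *\<^sub>R noise j s))"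
    by (rule sum.nested_swap')
  also have "\<dots> = (\<Sum>j<k. noise_term k j s)"
  proof -
    have shift: "(\<Sum>i\<in>{Suc j..k}. F i) = (\<Sum>d<k - j. F (Suc j + d))" for j and F :: "nat \<Rightarrow> real^'d"
      by (rule sum.reindex_bij_witness[where i="\<lambda>d. Suc j + d" and j="\<lambda>i. i - Suc j"]) auto
    show ?thesis unfolding noise_term_def noise_gain_def shift by simp
  qed
  finally show ?thesis .
qed

lemma determined_weighted_dev: "determined k (weighted_dev k)"
  unfolding determined_def
proof (intro allI impI)
  fix s t :: "nat \<Rightarrow> nat" assume "\<forall>i\<in>{1..k}. s i = t i"
  then have "path s i = path t i" if "i \<le> k" for i
    using determined_mono[OF determined_path that] unfolding determined_def by blast
  then show "weighted_dev k s = weighted_dev k t" unfolding weighted_dev_def by simp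
qed

lemma weighted_dev_centered_avg_w:
  "wP gam eta k *\<^sub>R avg_w gam eta (sgd_w x y eta \<xi>) k \<omega>
     - wP gam eta k *\<^sub>R integral\<^sup>L M (avg_w gam eta (sgd_w x y eta \<xi>) k) = weighted_dev k (index_seq \<omega>)"
  unfolding integral_avg_w avg_w_def weighted_dev_def sgd_w_eq_path using wP_pos[of k]
  by (simp add: sum_subtractf scaleR_diff_right)

text \<open>Martingale-difference structure: the noise injected at step \<open>j'\<close> averages out over the
  fresh index \<open>s (j' + 1)\<close>, while earlier noise terms do not depend on it.\<close>
lemma noise_terms_orthogonal:
  assumes "j < j'" "j' < k"
  shows "seq_mean k (\<lambda>s. inner (noise_term k j s) (noise_term k j' s)) = 0"
proof -
  let ?f = "\<lambda>s. inner (noise_term k j s) (noise_term k j' s)"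
  have dj: "determined j' (noise_term k j)"
    using assms by (intro determined_mono[OF determined_noise_term]) auto
  have "determined (Suc j') ?f"
  proof (unfold determined_def, intro allI impI)
    fix s t :: "nat \<Rightarrow> nat" assume "\<forall>i\<in>{1..Suc j'}. s i = t i"
    then have "noise_term k j s = noise_term k j t" "noise_term k j' s = noise_term k j' t"
      using determined_mono[OF dj, of "Suc j'"] determined_noise_term[of j' k]
      unfolding determined_def by auto
    then show "?f s = ?f t" by simp
  qed
  then have "seq_mean k ?f = seq_mean (Suc j') ?f"
    using assms by (intro seq_mean_determined_mono) auto
  also have "\<dots> = seq_mean j' (\<lambda>s. (1 / real n) *\<^sub>R (\<Sum>l<n. ?f (s(Suc j' := l))))"
    by (rule seq_mean_Suc)
  also have "\<dots> = seq_mean j' (\<lambda>s. 0::real)"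
  proof -
    have "(1 / real n) *\<^sub>R (\<Sum>l<n. noise_term k j' (s(Suc j' := l)))
        = noise_gain k j' (eta j' *\<^sub>R ((1 / real n) *\<^sub>R (\<Sum>l<n. noise j' (s(Suc j' := l)))))" for s
      unfolding noise_term_def
      by (simp add: linear_sum[OF linear_noise_gain] linear_scale[OF linear_noise_gain] scaleR_sum_right)
    then have zero: "(1 / real n) *\<^sub>R (\<Sum>l<n. noise_term k j' (s(Suc j' := l))) = 0" for s
      unfolding mean_noise_upd by (simp add: linear_0[OF linear_noise_gain])
    have split: "(1 / real n) *\<^sub>R (\<Sum>l<n. ?f (s(Suc j' := l)))
        = inner (noise_term k j s) ((1 / real n) *\<^sub>R (\<Sum>l<n. noise_term k j' (s(Suc j' := l))))" for s
      using determined_upd[OF dj] by (simp add: inner_sum_right)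
    show ?thesis by (simp only: split zero inner_zero_right)
  qed
  finally show ?thesis by (simp add: seq_mean_const)
qed

lemma seq_mean_norm_weighted_dev_sq:
  "seq_mean k (\<lambda>s. (norm (weighted_dev k s))\<^sup>2) = (\<Sum>j<k. seq_mean k (\<lambda>s. (norm (noise_term k j s))\<^sup>2))"
proof -
  have "seq_mean k (\<lambda>s. (norm (weighted_dev k s))\<^sup>2)
      = (\<Sum>j<k. \<Sum>j'<k. seq_mean k (\<lambda>s. inner (noise_term k j s) (noise_term k j' s)))"
    unfolding weighted_dev_eq power2_norm_eq_inner inner_sum_left inner_sum_right seq_mean_sum
    by (rule sum.swap)
  also have "\<dots> = (\<Sum>j<k. seq_mean k (\<lambda>s. inner (noise_term k j s) (noise_term k j s)))"
  proof (intro sum.cong refl)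
    fix j assume j: "j \<in> {..<k}"
    have "seq_mean k (\<lambda>s. inner (noise_term k j s) (noise_term k j' s)) = 0" if "j' \<in> {..<k} - {j}" for j'
      using that j noise_terms_orthogonal[of j j' k] noise_terms_orthogonal[of j' j k]
      by (cases "j < j'") (auto simp: inner_commute)
    then show "(\<Sum>j'<k. seq_mean k (\<lambda>s. inner (noise_term k j s) (noise_term k j' s)))
        = seq_mean k (\<lambda>s. inner (noise_term k j s) (noise_term k j s))"
      using j by (subst sum.remove[of _ j]) auto
  qed
  finally show ?thesis by (simp add: power2_norm_eq_inner)
qed

lemma seq_mean_norm_weighted_dev_sq_le:
  assumes noise_var: "\<And>j. seq_mean (Suc j) (\<lambda>s. (norm (noise j s))\<^sup>2) \<le> \<sigma>\<^sup>2"
  shows "seq_mean k (\<lambda>s. (norm (weighted_dev k s))\<^sup>2) \<le> \<sigma>\<^sup>2 * (\<Sum>j<k. (noise_coeff j)\<^sup>2)"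
proof -
  have "seq_mean k (\<lambda>s. (norm (noise_term k j s))\<^sup>2) \<le> (noise_coeff j)\<^sup>2 * \<sigma>\<^sup>2" if "j < k" for j
  proof -
    have "norm (noise_term k j s) \<le> noise_coeff j * norm (noise j s)" for s
      unfolding noise_term_def noise_coeff_def
      using norm_noise_gain_le[of k j "eta j *\<^sub>R noise j s"] eta_k_pos[of j] by (simp add: mult_ac)
    then have "(norm (noise_term k j s))\<^sup>2 \<le> (noise_coeff j * norm (noise j s))\<^sup>2" for s
      by (intro power_mono) auto
    then have "seq_mean k (\<lambda>s. (norm (noise_term k j s))\<^sup>2)
        \<le> seq_mean k (\<lambda>s. (noise_coeff j)\<^sup>2 *\<^sub>R (norm (noise j s))\<^sup>2)"
      by (intro seq_mean_mono) (simp add: power_mult_distrib)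
    also have "\<dots> = (noise_coeff j)\<^sup>2 * seq_mean k (\<lambda>s. (norm (noise j s))\<^sup>2)"
      unfolding seq_mean_scaleR by simp
    also have "seq_mean k (\<lambda>s. (norm (noise j s))\<^sup>2) = seq_mean (Suc j) (\<lambda>s. (norm (noise j s))\<^sup>2)"
      using that by (intro seq_mean_determined_mono determined_comp[OF determined_noise]) auto
    also have "(noise_coeff j)\<^sup>2 * \<dots> \<le> (noise_coeff j)\<^sup>2 * \<sigma>\<^sup>2"
      using noise_var[of j] by (rule mult_left_mono) simp
    finally show ?thesis .
  qed
  then have "(\<Sum>j<k. seq_mean k (\<lambda>s. (norm (noise_term k j s))\<^sup>2)) \<le> (\<Sum>j<k. (noise_coeff j)\<^sup>2 * \<sigma>\<^sup>2)"
    by (intro sum_mono) auto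
  then show ?thesis unfolding seq_mean_norm_weighted_dev_sq by (simp add: sum_distrib_left mult_ac)
qed

lemma integral_noise_sq:
  "integral\<^sup>L M (\<lambda>\<omega>. (norm ((data_Sigma x n *v sgd_w x y eta \<xi> k \<omega> - data_a x y n)
       - (outer (x (\<xi> (Suc k) \<omega>)) (x (\<xi> (Suc k) \<omega>)) *v sgd_w x y eta \<xi> k \<omega>
          - y (\<xi> (Suc k) \<omega>) *\<^sub>R x (\<xi> (Suc k) \<omega>))))\<^sup>2)
     = seq_mean (Suc k) (\<lambda>s. (norm (noise k s))\<^sup>2)"
  using integral_determined[OF determined_comp[OF determined_noise[of k]], of "\<lambda>v. (norm v)\<^sup>2"]
  unfolding noise_def sgd_w_eq_path by (simp add: index_seq_def)

lemma avg_w_concentration: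
  assumes "\<sigma> \<ge> 0" and "0 < \<delta>"
    and noise_var: "\<forall>k. integral\<^sup>L M (\<lambda>\<omega>. (norm ((data_Sigma x n *v sgd_w x y eta \<xi> k \<omega> - data_a x y n)
       - (outer (x (\<xi> (Suc k) \<omega>)) (x (\<xi> (Suc k) \<omega>)) *v sgd_w x y eta \<xi> k \<omega>
          - y (\<xi> (Suc k) \<omega>) *\<^sub>R x (\<xi> (Suc k) \<omega>))))\<^sup>2) \<le> \<sigma>\<^sup>2"
  shows "measure M {\<omega> \<in> space M.
           norm (wP gam eta k *\<^sub>R avg_w gam eta (sgd_w x y eta \<xi>) k \<omega>
                 - wP gam eta k *\<^sub>R integral\<^sup>L M (avg_w gam eta (sgd_w x y eta \<xi>) k))
           \<le> conf_radius \<sigma> \<delta>} \<ge> 1 - \<delta>"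
proof -
  have "seq_mean k (\<lambda>s. (norm (weighted_dev k s))\<^sup>2) \<le> \<sigma>\<^sup>2 * (\<Sum>j<k. (noise_coeff j)\<^sup>2)"
    using noise_var by (intro seq_mean_norm_weighted_dev_sq_le) (simp add: integral_noise_sq)
  also have "\<dots> \<le> (conf_radius \<sigma> \<delta>)\<^sup>2 * \<delta>"
    using \<open>0 < \<delta>\<close> by (rule noise_coeff_sum_le_conf_radius)
  finally have "seq_mean k (\<lambda>s. if norm (weighted_dev k s) \<le> conf_radius \<sigma> \<delta> then 1 else 0) \<ge> 1 - \<delta>"
    using assms conf_radius_nonneg by (intro seq_mean_chebyshev) auto
  then show ?thesis
    unfolding weighted_dev_centered_avg_w
    using measure_determined[OF determined_comp[OF determined_weighted_dev[of k],
          of "\<lambda>v. norm v \<le> conf_radius \<sigma> \<delta>"]] by simp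
qed

end

theorem theorem1:
  fixes x :: "nat \<Rightarrow> real^'d" and y :: "nat \<Rightarrow> real" and n :: nat
    and M :: "'a measure" and \<xi> :: "nat \<Rightarrow> 'a \<Rightarrow> nat"
    and \<alpha> \<beta> lam \<eta> \<sigma> :: real and eta :: "nat \<Rightarrow> real"
  assumes n_pos: "n > 0"
    and prob: "prob_space M"
    and indep: "prob_space.indep_vars M (\<lambda>_. count_space UNIV) \<xi> {1..}"
    and unif: "\<forall>k\<ge>1. \<forall>i<n. measure M {\<omega> \<in> space M. \<xi> k \<omega> = i} = 1 / real n"
    and alpha_pos: "0 < \<alpha>"
    and eig: "\<forall>\<mu>\<in>eigenvalues (data_Sigma x n). \<alpha> \<le> \<mu> \<and> \<mu> \<le> \<beta>"
    and lam_pos: "lam > 0"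
    and eta_pos: "\<eta> > 0"
    and eta_bnd: "\<forall>k. \<eta> \<le> eta k \<and> eta k < 1 / \<beta>"
  shows
    "let Sig = data_Sigma x n; a = data_a x y n;
         gam = (\<lambda>k. eta k / (1 + lam * eta k));
         \<gamma> = \<eta> / (1 + lam * \<eta>);
         w = sgd_w x y eta \<xi>;
         hw = sgd_ridge x y lam gam \<xi>;
         tw = avg_w gam eta w;
         P = wP gam eta
     in (\<forall>k. P k *\<^sub>R integral\<^sup>L M (tw k) = integral\<^sup>L M (hw k) - (1 - P k) *\<^sub>R integral\<^sup>L M (w k))
      \<and> ((\<lambda>k. integral\<^sup>L M (w k)) \<longlonglongrightarrow> matrix_inv Sig *v a)
      \<and> ((\<lambda>k. integral\<^sup>L M (hw k)) \<longlonglongrightarrow> matrix_inv (Sig + lam *\<^sub>R mat 1) *v a)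
      \<and> (\<exists>C. \<forall>k. norm (integral\<^sup>L M (hw k) - integral\<^sup>L M (tw k)) \<le> C * (1 - lam * \<gamma>) ^ k)
      \<and> ((\<sigma> \<ge> 0 \<and>
          (\<forall>k. integral\<^sup>L M (\<lambda>\<omega>. (norm ((Sig *v w k \<omega> - a)
                 - (outer (x (\<xi> (Suc k) \<omega>)) (x (\<xi> (Suc k) \<omega>)) *v w k \<omega>
                    - y (\<xi> (Suc k) \<omega>) *\<^sub>R x (\<xi> (Suc k) \<omega>))))\<^sup>2) \<le> \<sigma>\<^sup>2))
         \<longrightarrow> (\<forall>\<delta>. 0 < \<delta> \<and> \<delta> < 1 \<longrightarrow>
               (\<forall>\<^sub>F k in sequentially.
                  measure M {\<omega> \<in> space M.
                    norm (P k *\<^sub>R tw k \<omega> - P k *\<^sub>R integral\<^sup>L M (tw k))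
                    \<le> \<sigma> / (\<gamma> * (lam + \<alpha>) * (lam + \<beta>)\<^sup>2)
                        * sqrt (lam / (\<delta> * \<gamma> * (2 - lam * \<gamma>)))}
                  \<ge> 1 - \<delta>)))"
proof -
  interpret sgd_setting M \<xi> n x y \<alpha> \<beta> lam \<eta> eta
    using prob indep unif n_pos alpha_pos eig lam_pos eta_pos eta_bnd data_Sigma_self_adjoint
    by (intro sgd_setting.intro uniform_indices.intro uniform_indices_axioms.intro gd_setting.intro)
      auto
  have gam: "(\<lambda>k. eta k / (1 + lam * eta k)) = gam" by (simp add: fun_eq_iff gam_def)
  have "(\<lambda>k. integral\<^sup>L M (sgd_w x y eta \<xi> k)) \<longlonglongrightarrow> matrix_inv (data_Sigma x n) *v data_a x y n"
    using gd_tendsto by (simp add: integral_sgd_w w_opt_def)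
  moreover have "(\<lambda>k. integral\<^sup>L M (sgd_ridge x y lam gam \<xi> k))
      \<longlonglongrightarrow> matrix_inv (data_Sigma x n + lam *\<^sub>R mat 1) *v data_a x y n"
    using ridge_gd_tendsto by (simp add: integral_sgd_ridge w_ridge_def)
  moreover have "\<exists>C. \<forall>k. norm (integral\<^sup>L M (sgd_ridge x y lam gam \<xi> k)
      - integral\<^sup>L M (avg_w gam eta (sgd_w x y eta \<xi>) k)) \<le> C * (1 - lam * gam_min) ^ k"
    using expected_ridge_minus_avg_w_le by blast
  ultimately show ?thesis
    unfolding Let_def gam gam_min_def[symmetric] conf_radius_def[symmetric]
    using expected_avg_w_identity avg_w_concentration
    by (intro conjI allI impI always_eventually) blast+
qed

end
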